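(* Let $C:I\to\mathbb R^n$ be a smooth homotopy such that every curve $\theta\mapsto C(\theta,v)$ is immersed. Then for every $v\in[0,1]$ $$\frac{d}{dv}\sqrt{\mathrm{len}(C)(v)}\le\frac12\Big(\int_{S^1}\langle H,\partial_vC\rangle^2|\partial_\theta C|\,d\theta\Big)^{1/2},$$ and consequently for all $0\le v'<v''\le1$ $$\sqrt{\mathrm{len}(C)(v'')}-\sqrt{\mathrm{len}(C)(v')}\le\frac{\sqrt{J(C)}}{2}\sqrt{v''-v'} .$$ In particular $\sqrt{\mathrm{len}(C)}$ is Hölder continuous of exponent $1/2$ when $J(C)<\infty$.
   Context: $S^1=\mathbb R/2\pi\mathbb Z$, $I=S^1\times[0,1]$. $\mathrm{len}(C)(v)=\int_{S^1}|\partial_\theta C(\theta,v)|\,d\theta$. $T=\partial_\theta C/|\partial_\theta C|$, $H=\frac1{|\partial_\theta C|}\partial_\theta T$ (curvature vector), $\pi_Nw=w-\langle w,T\rangle T$, and $J(C)=\int_I|H|^2|\pi_N\partial_vC|^2|\partial_\theta C|\,d\theta\,dv$. *)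

theory Defs
  imports "HOL-Analysis.Analysis"
begin

text \<open>C-infinity smoothness on an open set: all iterated Frechet derivatives exist.
  D ds x is the iterated derivative in the directions of the list ds, evaluated at x.\<close>
definition smooth_on :: "'a::real_normed_vector set \<Rightarrow> ('a \<Rightarrow> 'b::real_normed_vector) \<Rightarrow> bool" where
  "smooth_on U f \<longleftrightarrow> open U \<and>
     (\<exists>D :: 'a list \<Rightarrow> 'a \<Rightarrow> 'b. D [] = f \<and>
        (\<forall>ds. \<forall>x\<in>U. (D ds has_derivative (\<lambda>h. D (h # ds) x)) (at x)))"

text \<open>A homotopy C(theta, v), theta in S^1 represented as 2pi-periodic in the first argument.\<close>

definition dth :: "(real \<times> real \<Rightarrow> 'a::real_normed_vector) \<Rightarrow> real \<Rightarrow> real \<Rightarrow> 'a" where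
  "dth C \<theta> v = vector_derivative (\<lambda>t. C (t, v)) (at \<theta>)"

definition dv :: "(real \<times> real \<Rightarrow> 'a::real_normed_vector) \<Rightarrow> real \<Rightarrow> real \<Rightarrow> 'a" where
  "dv C \<theta> v = vector_derivative (\<lambda>s. C (\<theta>, s)) (at v)"

definition len :: "(real \<times> real \<Rightarrow> 'a::real_normed_vector) \<Rightarrow> real \<Rightarrow> real" where
  "len C v = integral {0..2*pi} (\<lambda>\<theta>. norm (dth C \<theta> v))"

definition tangent :: "(real \<times> real \<Rightarrow> 'a::real_normed_vector) \<Rightarrow> real \<Rightarrow> real \<Rightarrow> 'a" where
  "tangent C \<theta> v = (1 / norm (dth C \<theta> v)) *\<^sub>R dth C \<theta> v"

definition curv :: "(real \<times> real \<Rightarrow> 'a::real_normed_vector) \<Rightarrow> real \<Rightarrow> real \<Rightarrow> 'a" where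
  "curv C \<theta> v = (1 / norm (dth C \<theta> v)) *\<^sub>R vector_derivative (\<lambda>t. tangent C t v) (at \<theta>)"

definition normal_proj :: "(real \<times> real \<Rightarrow> 'a::real_inner) \<Rightarrow> real \<Rightarrow> real \<Rightarrow> 'a \<Rightarrow> 'a" where
  "normal_proj C \<theta> v w = w - (inner w (tangent C \<theta> v)) *\<^sub>R tangent C \<theta> v"

definition Jfun :: "(real \<times> real \<Rightarrow> 'a::real_inner) \<Rightarrow> real" where
  "Jfun C = integral ({0..2*pi} \<times> {0..1})
     (\<lambda>(\<theta>, v). (norm (curv C \<theta> v))\<^sup>2 * (norm (normal_proj C \<theta> v (dv C \<theta> v)))\<^sup>2
                 * norm (dth C \<theta> v))"

end

theory Submission
  imports Defs
begin

(* Differentiating under the integral sign, len' = \<integral> <T, \<partial>\<^sub>v \<partial>\<^sub>\<theta> C> d\<theta>. Exchanging the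
   mixed partials and integrating by parts over the closed curve gives
   len' = - \<integral> <\<partial>\<^sub>\<theta> T, \<partial>\<^sub>v C> d\<theta> = - \<integral> <H, \<partial>\<^sub>v C> |\<partial>\<^sub>\<theta> C| d\<theta>, and the Cauchy-Schwarz
   inequality with weight |\<partial>\<^sub>\<theta> C| bounds |len'| by (\<integral> <H, \<partial>\<^sub>v C>\<^sup>2 |\<partial>\<^sub>\<theta> C| d\<theta>)^(1/2) len^(1/2),
   which is the bound for (sqrt len)'. As H is normal to the curve, <H, \<partial>\<^sub>v C> = <H, \<pi>\<^sub>N \<partial>\<^sub>v C>,
   so the energy under the root is at most the \<theta>-integral of the integrand of J; integrating
   the derivative bound from v' to v'' and applying Cauchy-Schwarz once more in v gives the
   Hoelder estimate. Both Cauchy-Schwarz steps come from 2 l x \<le> l\<^sup>2 a + b for all l > 0,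
   which forces x \<le> sqrt (a b). *)

lemma le_sqrt_mult_if_AM_GM_bound:
  fixes x a b :: real
  assumes AM_GM: "\<And>l. 0 < l \<Longrightarrow> 2 * l * x \<le> l\<^sup>2 * a + b" and "0 \<le> a" "0 < b"
  shows "x \<le> sqrt (a * b)"
proof (cases "a = 0")
  case True
  show ?thesis
  proof (rule ccontr)
    assume "\<not> x \<le> sqrt (a * b)"
    with True have "0 < x" by simp
    with AM_GM[of "b / x"] True \<open>0 < b\<close> show False by simp
  qed
next
  case False
  with \<open>0 \<le> a\<close> have "0 < a" by simp
  define l where "l = sqrt b / sqrt a"
  have "0 < l" "l\<^sup>2 * a = b"
    using \<open>0 < a\<close> \<open>0 < b\<close> by (simp_all add: l_def power_divide)
  with AM_GM[of l] have "x \<le> b / l" by (simp add: field_simps)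
  also have "b / l = sqrt (a * b)"
    using \<open>0 < a\<close> \<open>0 < b\<close> by (simp add: l_def real_sqrt_mult field_simps)
  finally show ?thesis .
qed

lemma abs_integral_le_weighted_Cauchy_Schwarz:
  fixes p w :: "'a::euclidean_space \<Rightarrow> real"
  assumes p: "p integrable_on S" and q: "(\<lambda>x. (p x)\<^sup>2 / w x) integrable_on S"
    and w: "w integrable_on S" and w_pos: "\<And>x. x \<in> S \<Longrightarrow> 0 < w x" and "0 < integral S w"
  shows "\<bar>integral S p\<bar> \<le> sqrt (integral S (\<lambda>x. (p x)\<^sup>2 / w x) * integral S w)"
proof (rule le_sqrt_mult_if_AM_GM_bound)
  fix l :: real assume "0 < l"
  let ?Q = "\<lambda>x. (p x)\<^sup>2 / w x"
  have pointwise: "norm ((2 * l) *\<^sub>R p x) \<le> l\<^sup>2 *\<^sub>R ?Q x + w x" if "x \<in> S" for x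
  proof -
    have "0 \<le> (l * \<bar>p x\<bar> - w x)\<^sup>2 / w x"
      using w_pos[OF that] by simp
    then show ?thesis
      using \<open>0 < l\<close> w_pos[OF that] by (simp add: abs_mult field_simps power2_eq_square)
  qed
  have "norm (integral S (\<lambda>x. (2 * l) *\<^sub>R p x)) \<le> integral S (\<lambda>x. l\<^sup>2 *\<^sub>R ?Q x + w x)"
    by (intro integral_norm_bound_integral integrable_cmul integrable_add p q w pointwise)
  then show "2 * l * \<bar>integral S p\<bar> \<le> l\<^sup>2 * integral S ?Q + integral S w"
    using \<open>0 < l\<close> unfolding integral_add[OF integrable_cmul[OF q] w] integral_cmul
    by (simp add: abs_mult)
next
  show "0 \<le> integral S (\<lambda>x. (p x)\<^sup>2 / w x)"
    using w_pos by (intro integral_nonneg q) (simp add: less_imp_le)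
qed fact

lemma DERIV_le_sqrt_imp_diff_le:
  fixes f f' g :: "real \<Rightarrow> real"
  assumes "a < b"
    and f': "\<And>x. x \<in> {a..b} \<Longrightarrow> (f has_real_derivative f' x) (at x within {a..b})"
    and f'_le: "\<And>x. x \<in> {a..b} \<Longrightarrow> f' x \<le> sqrt (g x)"
    and g: "continuous_on {a..b} g" and g_nonneg: "\<And>x. x \<in> {a..b} \<Longrightarrow> 0 \<le> g x"
  shows "f b - f a \<le> sqrt (integral {a..b} g * (b - a))"
proof (rule le_sqrt_mult_if_AM_GM_bound)
  fix l :: real assume "0 < l"
  \<comment> \<open>\<open>\<psi>\<close> subtracts from \<open>2 l f\<close> the AM-GM majorant \<open>l\<^sup>2 g + 1\<close> of its derivative\<close>
  define \<psi> where "\<psi> x = 2 * l * f x - l\<^sup>2 * integral {a..x} g - x" for x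
  have \<psi>': "(\<psi> has_real_derivative 2 * l * f' x - l\<^sup>2 * g x - 1) (at x within {a..b})"
    if "x \<in> {a..b}" for x
    unfolding \<psi>_def
    using f'[OF that] integral_has_real_derivative[OF g that]
    by (auto intro!: derivative_eq_intros)
  have \<psi>'_nonpos: "2 * l * f' x - l\<^sup>2 * g x - 1 \<le> 0" if "x \<in> {a..b}" for x
  proof -
    have "0 \<le> (l * sqrt (g x) - 1)\<^sup>2" by simp
    then have "2 * l * sqrt (g x) \<le> l\<^sup>2 * g x + 1"
      using g_nonneg[OF that] by (simp add: algebra_simps power2_eq_square)
    moreover have "2 * l * f' x \<le> 2 * l * sqrt (g x)"
      using f'_le[OF that] \<open>0 < l\<close> by simp
    ultimately show ?thesis by linarith
  qed
  have "\<psi> b \<le> \<psi> a"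
  proof (rule DERIV_nonpos_imp_decreasing_open[of a b \<psi>])
    show "continuous_on {a..b} \<psi>"
      unfolding continuous_on_eq_continuous_within using \<psi>' by (blast intro: DERIV_continuous)
    fix x assume "a < x" "x < b"
    then have x: "x \<in> {a..b}" and "at x within {a..b} = at x"
      by (auto intro: at_within_interior)
    with \<psi>'[OF x] \<psi>'_nonpos[OF x]
    show "\<exists>y. (\<psi> has_real_derivative y) (at x) \<and> y \<le> 0" by metis
  qed (use \<open>a < b\<close> in simp)
  then show "2 * l * (f b - f a) \<le> l\<^sup>2 * integral {a..b} g + (b - a)"
    by (simp add: \<psi>_def algebra_simps)
next
  show "0 \<le> integral {a..b} g"
    using g g_nonneg by (intro integral_nonneg integrable_continuous_real)
qed (use \<open>a < b\<close> in simp)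

lemma DERIV_abs_le_sqrt_imp_abs_diff_le:
  fixes f f' g :: "real \<Rightarrow> real"
  assumes "a \<le> b"
    and f': "\<And>x. x \<in> {a..b} \<Longrightarrow> (f has_real_derivative f' x) (at x within {a..b})"
    and f'_le: "\<And>x. x \<in> {a..b} \<Longrightarrow> \<bar>f' x\<bar> \<le> sqrt (g x)"
    and g: "continuous_on {a..b} g"
  shows "\<bar>f b - f a\<bar> \<le> sqrt (integral {a..b} g * (b - a))"
proof (cases "a = b")
  case False
  with \<open>a \<le> b\<close> have "a < b" by simp
  have g_nonneg: "0 \<le> g x" if "x \<in> {a..b}" for x
    using f'_le[OF that] abs_ge_zero order_trans real_sqrt_ge_0_iff by blast
  have "f b - f a \<le> sqrt (integral {a..b} g * (b - a))"
  proof (rule DERIV_le_sqrt_imp_diff_le[OF \<open>a < b\<close> f' _ g g_nonneg])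
    show "f' x \<le> sqrt (g x)" if "x \<in> {a..b}" for x
      using f'_le[OF that] by linarith
  qed
  moreover have "(- f b) - (- f a) \<le> sqrt (integral {a..b} g * (b - a))"
  proof (rule DERIV_le_sqrt_imp_diff_le[OF \<open>a < b\<close> _ _ g g_nonneg])
    fix x assume "x \<in> {a..b}"
    show "((\<lambda>x. - f x) has_real_derivative - f' x) (at x within {a..b})"
      using f'[OF \<open>x \<in> {a..b}\<close>] by (rule DERIV_minus)
    show "- f' x \<le> sqrt (g x)"
      using f'_le[OF \<open>x \<in> {a..b}\<close>] by linarith
  qed
  ultimately show ?thesis by linarith
qed simp

lemma has_real_derivative_norm:
  fixes g :: "real \<Rightarrow> 'a::real_inner"
  assumes g: "(g has_vector_derivative g') (at t within S)" and "g t \<noteq> 0"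
  shows "((\<lambda>t. norm (g t)) has_real_derivative (g t \<bullet> g') / norm (g t)) (at t within S)"
proof -
  have "((\<lambda>t. norm (g t)) has_derivative (\<lambda>h. (h *\<^sub>R g') \<bullet> sgn (g t))) (at t within S)"
    using has_derivative_compose[OF g[unfolded has_vector_derivative_def] has_derivative_norm[OF \<open>g t \<noteq> 0\<close>]]
    by simp
  moreover have "(\<lambda>h. (h *\<^sub>R g') \<bullet> sgn (g t)) = (*) ((g t \<bullet> g') / norm (g t))"
    by (simp add: fun_eq_iff sgn_div_norm inner_commute field_simps)
  ultimately show ?thesis
    by (simp add: has_field_derivative_def)
qed

lemma inner_sq_le_norm_orthogonal_component:
  fixes k t w :: "'a::real_inner"
  assumes "k \<bullet> t = 0"
  shows "(k \<bullet> w)\<^sup>2 \<le> (norm k)\<^sup>2 * (norm (w - (w \<bullet> t) *\<^sub>R t))\<^sup>2"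
proof -
  have "k \<bullet> w = k \<bullet> (w - (w \<bullet> t) *\<^sub>R t)"
    using assms by (simp add: inner_diff_right)
  also have "\<bar>\<dots>\<bar> \<le> norm k * norm (w - (w \<bullet> t) *\<^sub>R t)"
    by (rule Cauchy_Schwarz_ineq2)
  finally show ?thesis
    by (metis abs_ge_zero power2_abs power_mono power_mult_distrib)
qed

locale smooth_strip_map =
  fixes C :: "real \<times> real \<Rightarrow> 'a::euclidean_space"
    and D :: "(real \<times> real) list \<Rightarrow> real \<times> real \<Rightarrow> 'a"
    and U :: "(real \<times> real) set"
  assumes D_Nil: "D [] = C"
    and has_derivative_D: "\<And>ds x. x \<in> U \<Longrightarrow> (D ds has_derivative (\<lambda>h. D (h # ds) x)) (at x)"
    and strip_subset: "UNIV \<times> {0..1} \<subseteq> U"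
begin

text \<open>\<open>D [h\<^sub>n, \<dots>, h\<^sub>1]\<close> is \<open>\<partial>\<^sub>h\<^sub>n \<dots> \<partial>\<^sub>h\<^sub>1 C\<close>: the head of the list is the last direction
  of differentiation. So \<open>C\<^sub>\<theta>\<^sub>v\<close> below is \<open>\<partial>\<^sub>v \<partial>\<^sub>\<theta> C\<close> and \<open>C\<^sub>v\<^sub>\<theta>\<close> is \<open>\<partial>\<^sub>\<theta> \<partial>\<^sub>v C\<close>.\<close>

abbreviation "C\<^sub>\<theta> \<theta> v \<equiv> D [(1, 0)] (\<theta>, v)"
abbreviation "C\<^sub>v \<theta> v \<equiv> D [(0, 1)] (\<theta>, v)"
abbreviation "C\<^sub>\<theta>\<^sub>\<theta> \<theta> v \<equiv> D [(1, 0), (1, 0)] (\<theta>, v)"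
abbreviation "C\<^sub>\<theta>\<^sub>v \<theta> v \<equiv> D [(0, 1), (1, 0)] (\<theta>, v)"
abbreviation "C\<^sub>v\<^sub>\<theta> \<theta> v \<equiv> D [(1, 0), (0, 1)] (\<theta>, v)"

lemma D_Cons_scaleR: "x \<in> U \<Longrightarrow> D ((c *\<^sub>R h) # ds) x = c *\<^sub>R D (h # ds) x"
  using linear_scale[OF has_derivative_linear[OF has_derivative_D]] by blast

lemma has_vector_derivative_D_line:
  assumes "x + t *\<^sub>R h \<in> U"
  shows "((\<lambda>s. D ds (x + s *\<^sub>R h)) has_vector_derivative D (h # ds) (x + t *\<^sub>R h)) (at t within S)"
proof -
  have "((\<lambda>s. x + s *\<^sub>R h) has_derivative (\<lambda>s. s *\<^sub>R h)) (at t within S)"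
    by (auto intro!: derivative_eq_intros)
  from has_derivative_compose[OF this has_derivative_D[OF assms]]
  show ?thesis
    by (simp add: has_vector_derivative_def D_Cons_scaleR[OF assms])
qed

lemma strip_in_U: "v \<in> {0..1} \<Longrightarrow> (\<theta>, v) \<in> U"
  using strip_subset by auto

lemma has_vector_derivative_D_theta:
  "v \<in> {0..1} \<Longrightarrow> ((\<lambda>t. D ds (t, v)) has_vector_derivative D ((1, 0) # ds) (\<theta>, v)) (at \<theta> within S)"
  using has_vector_derivative_D_line[of "(0, v)" \<theta> "(1, 0)" ds S] strip_in_U by simp

lemma has_vector_derivative_D_v:
  "v \<in> {0..1} \<Longrightarrow> ((\<lambda>s. D ds (\<theta>, s)) has_vector_derivative D ((0, 1) # ds) (\<theta>, v)) (at v within S)"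
  using has_vector_derivative_D_line[of "(\<theta>, 0)" v "(0, 1)" ds S] strip_in_U by simp

lemma continuous_on_D_compose [continuous_intros]:
  assumes "continuous_on S f" "\<And>x. x \<in> S \<Longrightarrow> snd (f x) \<in> {0..1}"
  shows "continuous_on S (\<lambda>x. D ds (f x))"
proof (rule continuous_on_compose2[OF _ assms(1)])
  show "continuous_on (UNIV \<times> {0..1}) (D ds)"
    using strip_subset has_derivative_D
    by (meson continuous_at_imp_continuous_on has_derivative_continuous subsetD)
qed (use assms(2) in \<open>simp add: image_subset_iff mem_Times_iff\<close>)

lemma dth_eq: "v \<in> {0..1} \<Longrightarrow> dth C \<theta> v = C\<^sub>\<theta> \<theta> v"
  unfolding dth_def D_Nil[symmetric] using has_vector_derivative_D_theta
  by (blast intro: vector_derivative_at)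

lemma dv_eq: "v \<in> {0..1} \<Longrightarrow> dv C \<theta> v = C\<^sub>v \<theta> v"
  unfolding dv_def D_Nil[symmetric] using has_vector_derivative_D_v
  by (blast intro: vector_derivative_at)

lemma integral_C_theta_v:
  assumes "v \<in> {0..1}" "a \<le> b"
  shows "integral {a..b} (\<lambda>t. C\<^sub>\<theta>\<^sub>v t v) = C\<^sub>v b v - C\<^sub>v a v"
proof -
  have C_diff: "C (b, s) - C (a, s) = integral {a..b} (\<lambda>t. C\<^sub>\<theta> t s)" if "s \<in> {0..1}" for s
    using fundamental_theorem_of_calculus[OF \<open>a \<le> b\<close> has_vector_derivative_D_theta[OF that, where ds = "[]"]]
    by (simp add: D_Nil integral_unique)
  have "((\<lambda>s. integral {a..b} (\<lambda>t. C\<^sub>\<theta> t s)) has_vector_derivative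
      integral {a..b} (\<lambda>t. C\<^sub>\<theta>\<^sub>v t v)) (at v within {0..1})"
    unfolding cbox_interval[symmetric]
    by (rule leibniz_rule_vector_derivative)
      (use \<open>v \<in> {0..1}\<close> in \<open>auto intro!: has_vector_derivative_D_v integrable_continuous_real continuous_intros
        simp: case_prod_beta' cbox_interval\<close>)
  then have "((\<lambda>s. C (b, s) - C (a, s)) has_vector_derivative integral {a..b} (\<lambda>t. C\<^sub>\<theta>\<^sub>v t v))
      (at v within {0..1})"
    by (rule has_vector_derivative_transform[OF \<open>v \<in> {0..1}\<close>, rotated]) (simp add: C_diff)
  moreover have "((\<lambda>s. C (b, s) - C (a, s)) has_vector_derivative C\<^sub>v b v - C\<^sub>v a v) (at v within {0..1})"
    unfolding D_Nil[symmetric]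
    using \<open>v \<in> {0..1}\<close> by (intro has_vector_derivative_diff has_vector_derivative_D_v)
  ultimately show ?thesis
    using \<open>v \<in> {0..1}\<close>
    by (intro vector_derivative_unique_within_closed_interval[of 0 1 v]) (auto simp: cbox_interval)
qed

lemma mixed_partials_commute:
  assumes "v \<in> {0..1}"
  shows "C\<^sub>\<theta>\<^sub>v \<theta> v = C\<^sub>v\<^sub>\<theta> \<theta> v"
proof -
  let ?a = "\<theta> - 1"
  have cont: "continuous_on {?a..\<theta>} (\<lambda>t. D ds (t, v))" for ds
    using assms by (intro continuous_intros) auto
  have "((\<lambda>x. C\<^sub>v x v - C\<^sub>v ?a v) has_vector_derivative C\<^sub>\<theta>\<^sub>v \<theta> v) (at \<theta> within {?a..\<theta>})"
  proof (rule has_vector_derivative_transform[OF _ _ integral_has_vector_derivative[OF cont]])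
    show "C\<^sub>v x v - C\<^sub>v ?a v = integral {?a..x} (\<lambda>t. C\<^sub>\<theta>\<^sub>v t v)" if "x \<in> {?a..\<theta>}" for x
      using that integral_C_theta_v[OF assms] by simp
  qed simp_all
  moreover have "((\<lambda>x. C\<^sub>v x v - C\<^sub>v ?a v) has_vector_derivative C\<^sub>v\<^sub>\<theta> \<theta> v) (at \<theta> within {?a..\<theta>})"
    using has_vector_derivative_diff[OF has_vector_derivative_D_theta[OF assms] has_vector_derivative_const]
    by simp
  ultimately show ?thesis
    by (intro vector_derivative_unique_within_closed_interval[of ?a \<theta> \<theta>]) (auto simp: cbox_interval)
qed

end

locale closed_immersed_homotopy = smooth_strip_map +
  assumes periodic: "\<And>\<theta> v. v \<in> {0..1} \<Longrightarrow> C (\<theta> + 2*pi, v) = C (\<theta>, v)"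
    and immersed: "\<And>\<theta> v. v \<in> {0..1} \<Longrightarrow> dth C \<theta> v \<noteq> 0"
begin

lemma C_theta_nonzero: "v \<in> {0..1} \<Longrightarrow> C\<^sub>\<theta> \<theta> v \<noteq> 0"
  using immersed dth_eq by metis

lemma C_theta_periodic:
  assumes "v \<in> {0..1}"
  shows "C\<^sub>\<theta> (2*pi) v = C\<^sub>\<theta> 0 v"
proof -
  have "((\<lambda>t. D [] ((2*pi, v) + t *\<^sub>R (1, 0))) has_vector_derivative C\<^sub>\<theta> (2*pi) v) (at 0)"
    using has_vector_derivative_D_line[of "(2*pi, v)" 0 "(1, 0)" "[]" UNIV] strip_in_U[OF assms]
    by simp
  moreover have "(\<lambda>t. D [] ((2*pi, v) + t *\<^sub>R (1, 0))) = (\<lambda>t. D [] (t, v))"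
    using periodic[OF assms] by (simp add: D_Nil add.commute)
  ultimately have "((\<lambda>t. D [] (t, v)) has_vector_derivative C\<^sub>\<theta> (2*pi) v) (at 0)"
    by simp
  moreover have "((\<lambda>t. D [] (t, v)) has_vector_derivative C\<^sub>\<theta> 0 v) (at 0)"
    using has_vector_derivative_D_theta[OF assms] .
  ultimately show ?thesis
    by (rule vector_derivative_unique_at)
qed

lemma C_v_periodic:
  assumes "v \<in> {0..1}"
  shows "C\<^sub>v (2*pi) v = C\<^sub>v 0 v"
proof -
  have "((\<lambda>s. D [] (0, s)) has_vector_derivative C\<^sub>v (2*pi) v) (at v within {0..1})"
    by (rule has_vector_derivative_transform[OF assms _ has_vector_derivative_D_v[OF assms]])
      (use periodic[of _ 0] in \<open>simp add: D_Nil\<close>)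
  moreover have "((\<lambda>s. D [] (0, s)) has_vector_derivative C\<^sub>v 0 v) (at v within {0..1})"
    using has_vector_derivative_D_v[OF assms] .
  ultimately show ?thesis
    using assms
    by (intro vector_derivative_unique_within_closed_interval[of 0 1 v]) (auto simp: cbox_interval)
qed

abbreviation "\<tau> \<theta> v \<equiv> (1 / norm (C\<^sub>\<theta> \<theta> v)) *\<^sub>R C\<^sub>\<theta> \<theta> v"
abbreviation "\<tau>' \<theta> v \<equiv> (1 / norm (C\<^sub>\<theta> \<theta> v)) *\<^sub>R C\<^sub>\<theta>\<^sub>\<theta> \<theta> v
  - ((C\<^sub>\<theta> \<theta> v \<bullet> C\<^sub>\<theta>\<^sub>\<theta> \<theta> v) / norm (C\<^sub>\<theta> \<theta> v) ^ 3) *\<^sub>R C\<^sub>\<theta> \<theta> v"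

lemma has_vector_derivative_unit_tangent:
  assumes "v \<in> {0..1}"
  shows "((\<lambda>t. \<tau> t v) has_vector_derivative \<tau>' \<theta> v) (at \<theta> within S)"
proof -
  note C_theta = has_vector_derivative_D_theta[OF assms, of "[(1, 0)]"]
  have "norm (C\<^sub>\<theta> \<theta> v) \<noteq> 0"
    using C_theta_nonzero[OF assms] by simp
  with has_real_derivative_norm[OF C_theta C_theta_nonzero[OF assms]]
  have "((\<lambda>t. 1 / norm (C\<^sub>\<theta> t v)) has_real_derivative
      - ((C\<^sub>\<theta> \<theta> v \<bullet> C\<^sub>\<theta>\<^sub>\<theta> \<theta> v) / norm (C\<^sub>\<theta> \<theta> v) ^ 3)) (at \<theta> within S)"
    by (auto intro!: derivative_eq_intros simp: power_def field_simps)
  from has_vector_derivative_scaleR[OF this C_theta] show ?thesis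
    by (simp add: algebra_simps)
qed

lemma tangent_eq: "v \<in> {0..1} \<Longrightarrow> tangent C \<theta> v = \<tau> \<theta> v"
  unfolding tangent_def by (simp add: dth_eq)

abbreviation "\<kappa> \<theta> v \<equiv> (1 / norm (C\<^sub>\<theta> \<theta> v)) *\<^sub>R \<tau>' \<theta> v"

lemma curv_eq: "v \<in> {0..1} \<Longrightarrow> curv C \<theta> v = \<kappa> \<theta> v"
  unfolding curv_def tangent_eq dth_eq
  using has_vector_derivative_unit_tangent by (simp add: vector_derivative_at)

lemma unit_tangent_derivative_orthogonal:
  assumes "v \<in> {0..1}"
  shows "\<tau>' \<theta> v \<bullet> C\<^sub>\<theta> \<theta> v = 0"
proof -
  let ?n = "norm (C\<^sub>\<theta> \<theta> v)"
  have "?n \<noteq> 0"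
    using C_theta_nonzero[OF assms] by simp
  have "\<tau>' \<theta> v \<bullet> C\<^sub>\<theta> \<theta> v
      = (C\<^sub>\<theta> \<theta> v \<bullet> C\<^sub>\<theta>\<^sub>\<theta> \<theta> v) / ?n - ((C\<^sub>\<theta> \<theta> v \<bullet> C\<^sub>\<theta>\<^sub>\<theta> \<theta> v) / ?n ^ 3) * (C\<^sub>\<theta> \<theta> v \<bullet> C\<^sub>\<theta> \<theta> v)"
    by (simp add: inner_diff_left inner_diff_right inner_commute)
  also have "\<dots> = 0"
    using \<open>?n \<noteq> 0\<close> by (simp add: power2_norm_eq_inner[symmetric] field_simps power_def)
  finally show ?thesis .
qed

lemma curv_orthogonal_tangent: "v \<in> {0..1} \<Longrightarrow> curv C \<theta> v \<bullet> tangent C \<theta> v = 0"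
  by (simp add: curv_eq tangent_eq unit_tangent_derivative_orthogonal)

lemma len_eq: "v \<in> {0..1} \<Longrightarrow> len C v = integral {0..2*pi} (\<lambda>\<theta>. norm (C\<^sub>\<theta> \<theta> v))"
  unfolding len_def by (simp add: dth_eq)

lemma len_pos:
  assumes "v \<in> {0..1}"
  shows "0 < len C v"
proof -
  have cont: "continuous_on {0..2*pi} (\<lambda>\<theta>. norm (C\<^sub>\<theta> \<theta> v))"
    using assms by (intro continuous_intros) auto
  obtain \<theta>\<^sub>0 where "\<theta>\<^sub>0 \<in> {0..2*pi}" and min: "\<And>\<theta>. \<theta> \<in> {0..2*pi} \<Longrightarrow> norm (C\<^sub>\<theta> \<theta>\<^sub>0 v) \<le> norm (C\<^sub>\<theta> \<theta> v)"
    using continuous_attains_inf[OF compact_Icc _ cont] by auto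
  have "0 < 2*pi * norm (C\<^sub>\<theta> \<theta>\<^sub>0 v)"
    using C_theta_nonzero[OF assms] by simp
  also have "\<dots> = integral {0..2*pi} (\<lambda>\<theta>. norm (C\<^sub>\<theta> \<theta>\<^sub>0 v))"
    by simp
  also have "\<dots> \<le> len C v"
    unfolding len_eq[OF assms] using cont min by (intro integral_le integrable_continuous_real) auto
  finally show ?thesis .
qed

lemma integral_unit_tangent_by_parts:
  assumes "v \<in> {0..1}"
  shows "integral {0..2*pi} (\<lambda>\<theta>. \<tau> \<theta> v \<bullet> C\<^sub>v\<^sub>\<theta> \<theta> v) = - integral {0..2*pi} (\<lambda>\<theta>. \<tau>' \<theta> v \<bullet> C\<^sub>v \<theta> v)"
proof -
  have "((\<lambda>\<theta>. \<tau> \<theta> v \<bullet> C\<^sub>v\<^sub>\<theta> \<theta> v + \<tau>' \<theta> v \<bullet> C\<^sub>v \<theta> v) has_integral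
      \<tau> (2*pi) v \<bullet> C\<^sub>v (2*pi) v - \<tau> 0 v \<bullet> C\<^sub>v 0 v) {0..2*pi}"
    by (intro fundamental_theorem_of_calculus bounded_bilinear.has_vector_derivative[OF bounded_bilinear_inner]
        has_vector_derivative_unit_tangent[OF assms] has_vector_derivative_D_theta[OF assms]) simp
  then have "integral {0..2*pi} (\<lambda>\<theta>. \<tau> \<theta> v \<bullet> C\<^sub>v\<^sub>\<theta> \<theta> v + \<tau>' \<theta> v \<bullet> C\<^sub>v \<theta> v) = 0"
    by (simp add: integral_unique C_theta_periodic[OF assms] C_v_periodic[OF assms])
  moreover have "(\<lambda>\<theta>. \<tau> \<theta> v \<bullet> C\<^sub>v\<^sub>\<theta> \<theta> v) integrable_on {0..2*pi}"
    "(\<lambda>\<theta>. \<tau>' \<theta> v \<bullet> C\<^sub>v \<theta> v) integrable_on {0..2*pi}"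
    using assms by (auto intro!: integrable_continuous_real continuous_intros simp: C_theta_nonzero)
  ultimately show ?thesis
    by (simp add: integral_add eq_neg_iff_add_eq_0)
qed

definition len_deriv :: "real \<Rightarrow> real" where
  "len_deriv v = - integral {0..2*pi} (\<lambda>\<theta>. \<tau>' \<theta> v \<bullet> C\<^sub>v \<theta> v)"

lemma has_real_derivative_len:
  assumes "v \<in> {0..1}"
  shows "(len C has_real_derivative len_deriv v) (at v within {0..1})"
proof -
  have "((\<lambda>s. integral {0..2*pi} (\<lambda>\<theta>. norm (C\<^sub>\<theta> \<theta> s))) has_real_derivative
      integral {0..2*pi} (\<lambda>\<theta>. \<tau> \<theta> v \<bullet> C\<^sub>\<theta>\<^sub>v \<theta> v)) (at v within {0..1})"
    unfolding cbox_interval[symmetric]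
  proof (rule leibniz_rule_field_derivative)
    fix s \<theta> :: real assume "s \<in> cbox 0 1"
    then have "s \<in> {0..1}" by (simp add: cbox_interval)
    from has_real_derivative_norm[OF has_vector_derivative_D_v[OF this] C_theta_nonzero[OF this]]
    show "((\<lambda>s. norm (C\<^sub>\<theta> \<theta> s)) has_real_derivative \<tau> \<theta> s \<bullet> C\<^sub>\<theta>\<^sub>v \<theta> s) (at s within cbox 0 1)"
      by (simp add: cbox_interval)
  qed (use assms in \<open>auto intro!: integrable_continuous_real continuous_intros
      simp: case_prod_beta' cbox_interval mem_Times_iff C_theta_nonzero\<close>)
  then have "(len C has_real_derivative integral {0..2*pi} (\<lambda>\<theta>. \<tau> \<theta> v \<bullet> C\<^sub>\<theta>\<^sub>v \<theta> v)) (at v within {0..1})"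
    by (rule has_field_derivative_transform_within[OF _ zero_less_one assms]) (simp add: len_eq)
  then show ?thesis
    unfolding mixed_partials_commute[OF assms] integral_unit_tangent_by_parts[OF assms] len_deriv_def .
qed

definition curv_velocity_energy :: "real \<Rightarrow> real" where
  "curv_velocity_energy v = integral {0..2*pi} (\<lambda>\<theta>. (curv C \<theta> v \<bullet> dv C \<theta> v)\<^sup>2 * norm (dth C \<theta> v))"

lemma curv_velocity_integrand_eq:
  assumes "v \<in> {0..1}"
  shows "(curv C \<theta> v \<bullet> dv C \<theta> v)\<^sup>2 * norm (dth C \<theta> v) = (\<tau>' \<theta> v \<bullet> C\<^sub>v \<theta> v)\<^sup>2 / norm (C\<^sub>\<theta> \<theta> v)"
proof -
  have "norm (C\<^sub>\<theta> \<theta> v) \<noteq> 0"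
    using C_theta_nonzero[OF assms] by simp
  then show ?thesis
    using assms by (simp add: curv_eq dv_eq dth_eq power2_eq_square)
qed

lemma abs_len_deriv_le:
  assumes "v \<in> {0..1}"
  shows "\<bar>len_deriv v\<bar> \<le> sqrt (curv_velocity_energy v * len C v)"
proof -
  have "curv_velocity_energy v = integral {0..2*pi} (\<lambda>\<theta>. (\<tau>' \<theta> v \<bullet> C\<^sub>v \<theta> v)\<^sup>2 / norm (C\<^sub>\<theta> \<theta> v))"
    unfolding curv_velocity_energy_def using assms by (simp add: curv_velocity_integrand_eq)
  then show ?thesis
    unfolding len_deriv_def len_eq[OF assms] abs_minus_cancel
    using assms len_pos[OF assms]
    by (auto intro!: abs_integral_le_weighted_Cauchy_Schwarz integrable_continuous_real continuous_intros
        simp: C_theta_nonzero len_eq)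
qed

lemma has_real_derivative_sqrt_len:
  assumes "v \<in> {0..1}"
  shows "((\<lambda>s. sqrt (len C s)) has_real_derivative len_deriv v / (2 * sqrt (len C v))) (at v within {0..1})"
proof -
  have eq: "inverse (sqrt (len C v)) / 2 * len_deriv v = len_deriv v / (2 * sqrt (len C v))"
    using len_pos[OF assms] by (simp add: field_simps)
  from DERIV_chain2[OF DERIV_real_sqrt[OF len_pos[OF assms]] has_real_derivative_len[OF assms]]
  show ?thesis
    unfolding eq .
qed

lemma abs_sqrt_len_deriv_le:
  assumes "v \<in> {0..1}"
  shows "\<bar>len_deriv v / (2 * sqrt (len C v))\<bar> \<le> sqrt (curv_velocity_energy v) / 2"
proof -
  have "\<bar>len_deriv v\<bar> \<le> sqrt (curv_velocity_energy v) * sqrt (len C v)"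
    using abs_len_deriv_le[OF assms] by (simp add: real_sqrt_mult)
  then show ?thesis
    using len_pos[OF assms] by (simp add: field_simps)
qed

definition J_density :: "real \<Rightarrow> real \<Rightarrow> real" where
  "J_density \<theta> v = (norm (curv C \<theta> v))\<^sup>2 * (norm (normal_proj C \<theta> v (dv C \<theta> v)))\<^sup>2 * norm (dth C \<theta> v)"

lemma J_density_eq:
  "v \<in> {0..1} \<Longrightarrow> J_density \<theta> v
    = (norm (\<kappa> \<theta> v))\<^sup>2 * (norm (C\<^sub>v \<theta> v - (C\<^sub>v \<theta> v \<bullet> \<tau> \<theta> v) *\<^sub>R \<tau> \<theta> v))\<^sup>2 * norm (C\<^sub>\<theta> \<theta> v)"
  by (simp add: J_density_def normal_proj_def curv_eq dv_eq tangent_eq dth_eq)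

lemma continuous_on_J_density_compose [continuous_intros]:
  assumes "continuous_on S f" "continuous_on S g" "\<And>x. x \<in> S \<Longrightarrow> g x \<in> {0..1}"
  shows "continuous_on S (\<lambda>x. J_density (f x) (g x))"
proof -
  have "continuous_on (UNIV \<times> {0..1}) (\<lambda>p. (norm (\<kappa> (fst p) (snd p)))\<^sup>2
      * (norm (C\<^sub>v (fst p) (snd p) - (C\<^sub>v (fst p) (snd p) \<bullet> \<tau> (fst p) (snd p)) *\<^sub>R \<tau> (fst p) (snd p)))\<^sup>2
      * norm (C\<^sub>\<theta> (fst p) (snd p)))"
    by (intro continuous_intros) (auto simp: mem_Times_iff C_theta_nonzero)
  then have "continuous_on (UNIV \<times> {0..1}) (\<lambda>p. J_density (fst p) (snd p))"
    by (rule continuous_on_eq) (auto simp: mem_Times_iff J_density_eq)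
  then have "continuous_on S (\<lambda>x. (\<lambda>p. J_density (fst p) (snd p)) (f x, g x))"
    by (rule continuous_on_compose2) (use assms in \<open>auto intro: continuous_on_Pair\<close>)
  then show ?thesis
    by simp
qed

lemma curv_velocity_energy_le:
  assumes "v \<in> {0..1}"
  shows "curv_velocity_energy v \<le> integral {0..2*pi} (\<lambda>\<theta>. J_density \<theta> v)"
  unfolding curv_velocity_energy_def
proof (rule integral_le)
  show "(\<lambda>\<theta>. (curv C \<theta> v \<bullet> dv C \<theta> v)\<^sup>2 * norm (dth C \<theta> v)) integrable_on {0..2*pi}"
    unfolding curv_velocity_integrand_eq[OF assms]
    using assms by (auto intro!: integrable_continuous_real continuous_intros simp: C_theta_nonzero)
  show "(\<lambda>\<theta>. J_density \<theta> v) integrable_on {0..2*pi}"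
    using assms by (auto intro!: integrable_continuous_real continuous_intros)
  fix \<theta>
  show "(curv C \<theta> v \<bullet> dv C \<theta> v)\<^sup>2 * norm (dth C \<theta> v) \<le> J_density \<theta> v"
    unfolding J_density_def normal_proj_def
    using inner_sq_le_norm_orthogonal_component[OF curv_orthogonal_tangent[OF assms]]
    by (simp add: mult_right_mono)
qed

lemma continuous_on_integral_J_density: "continuous_on {0..1} (\<lambda>v. integral {0..2*pi} (\<lambda>\<theta>. J_density \<theta> v))"
proof -
  have "continuous_on ({0..1} \<times> cbox 0 (2*pi)) (\<lambda>(v, \<theta>). J_density \<theta> v)"
    unfolding case_prod_beta' by (intro continuous_intros) (auto simp: mem_Times_iff)
  from integral_continuous_on_param[OF this] show ?thesis
    by (simp add: cbox_interval)
qed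

lemma Jfun_eq_iterated_integral: "Jfun C = integral {0..1} (\<lambda>v. integral {0..2*pi} (\<lambda>\<theta>. J_density \<theta> v))"
proof -
  have cont: "continuous_on (cbox (0, 0) (2*pi, 1)) (\<lambda>p. J_density (fst p) (snd p))"
    by (intro continuous_intros) (auto simp: cbox_Pair_eq mem_Times_iff cbox_interval)
  have "Jfun C = integral (cbox (0, 0) (2*pi, 1)) (\<lambda>p. J_density (fst p) (snd p))"
    unfolding Jfun_def J_density_def cbox_Pair_eq by (simp add: cbox_interval case_prod_beta')
  also have "\<dots> = integral (cbox 0 (2*pi)) (\<lambda>\<theta>. integral (cbox 0 1) (\<lambda>v. J_density \<theta> v))"
    using integral_prod_continuous[OF cont] by simp
  also have "\<dots> = integral (cbox 0 1) (\<lambda>v. integral (cbox 0 (2*pi)) (\<lambda>\<theta>. J_density \<theta> v))"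
    by (rule integral_swap_continuous) (use cont in \<open>simp add: case_prod_beta'\<close>)
  finally show ?thesis
    by (simp add: cbox_interval)
qed

lemma sqrt_len_Holder:
  assumes "v' \<in> {0..1}" "v'' \<in> {0..1}"
  shows "\<bar>sqrt (len C v'') - sqrt (len C v')\<bar> \<le> sqrt (Jfun C) / 2 * sqrt \<bar>v'' - v'\<bar>"
proof -
  let ?J = "\<lambda>v. integral {0..2*pi} (\<lambda>\<theta>. J_density \<theta> v)"
  have J_nonneg: "0 \<le> ?J v" if "v \<in> {0..1}" for v
    using that by (intro integral_nonneg integrable_continuous_real continuous_intros) (auto simp: J_density_def)
  have ordered: "\<bar>sqrt (len C b) - sqrt (len C a)\<bar> \<le> sqrt (Jfun C) / 2 * sqrt (b - a)"
    if "0 \<le> a" "a \<le> b" "b \<le> 1" for a b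
  proof -
    have sub: "{a..b} \<subseteq> {0..1}"
      using that by auto
    have "\<bar>sqrt (len C b) - sqrt (len C a)\<bar> \<le> sqrt (integral {a..b} (\<lambda>v. ?J v / 4) * (b - a))"
    proof (rule DERIV_abs_le_sqrt_imp_abs_diff_le[OF \<open>a \<le> b\<close>])
      fix v assume "v \<in> {a..b}"
      with sub have v: "v \<in> {0..1}" by auto
      show "((\<lambda>s. sqrt (len C s)) has_real_derivative len_deriv v / (2 * sqrt (len C v))) (at v within {a..b})"
        using has_real_derivative_sqrt_len[OF v] sub by (rule DERIV_subset)
      have "sqrt (curv_velocity_energy v) / 2 \<le> sqrt (?J v / 4)"
        using curv_velocity_energy_le[OF v] by (simp add: real_sqrt_divide)
      with abs_sqrt_len_deriv_le[OF v]
      show "\<bar>len_deriv v / (2 * sqrt (len C v))\<bar> \<le> sqrt (?J v / 4)" by linarith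
    next
      show "continuous_on {a..b} (\<lambda>v. ?J v / 4)"
        using continuous_on_subset[OF continuous_on_integral_J_density sub] by (intro continuous_intros) auto
    qed
    also have "integral {a..b} (\<lambda>v. ?J v / 4) \<le> Jfun C / 4"
      unfolding Jfun_eq_iterated_integral
      using sub J_nonneg continuous_on_integral_J_density continuous_on_subset[OF continuous_on_integral_J_density sub]
      by (simp add: integral_subset_le integrable_continuous_real)
    then have "sqrt (integral {a..b} (\<lambda>v. ?J v / 4) * (b - a)) \<le> sqrt (Jfun C / 4 * (b - a))"
      using that by (simp add: mult_right_mono)
    also have "\<dots> = sqrt (Jfun C) / 2 * sqrt (b - a)"
      by (simp add: real_sqrt_mult real_sqrt_divide)
    finally show ?thesis .
  qed
  show ?thesis
  proof (cases "v' \<le> v''")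
    case True
    with ordered[of v' v''] assms show ?thesis by simp
  next
    case False
    with ordered[of v'' v'] assms show ?thesis by (simp add: abs_minus_commute)
  qed
qed

end

theorem mainTheorem6:
  fixes C :: "real \<times> real \<Rightarrow> real ^ 'n" and U :: "(real \<times> real) set"
  assumes smooth: "smooth_on U C"
    and dom: "UNIV \<times> {0..1} \<subseteq> U"
    and periodic: "\<And>\<theta> v. v \<in> {0..1} \<Longrightarrow> C (\<theta> + 2*pi, v) = C (\<theta>, v)"
    and immersed: "\<And>\<theta> v. v \<in> {0..1} \<Longrightarrow> dth C \<theta> v \<noteq> 0"
  shows "(\<forall>v\<in>{0..1}. \<exists>D. ((\<lambda>s. sqrt (len C s)) has_real_derivative D) (at v within {0..1}) \<and>
            D \<le> 1/2 * sqrt (integral {0..2*pi}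
                   (\<lambda>\<theta>. (inner (curv C \<theta> v) (dv C \<theta> v))\<^sup>2 * norm (dth C \<theta> v))))
       \<and> (\<forall>v' v''. 0 \<le> v' \<and> v' < v'' \<and> v'' \<le> 1 \<longrightarrow>
            sqrt (len C v'') - sqrt (len C v') \<le> sqrt (Jfun C) / 2 * sqrt (v'' - v'))
       \<and> (\<exists>K. \<forall>v'\<in>{0..1}. \<forall>v''\<in>{0..1}.
            \<bar>sqrt (len C v'') - sqrt (len C v')\<bar> \<le> K * sqrt \<bar>v'' - v'\<bar>)"
proof -
  obtain D where "D [] = C" "\<And>ds x. x \<in> U \<Longrightarrow> (D ds has_derivative (\<lambda>h. D (h # ds) x)) (at x)"
    using smooth unfolding smooth_on_def by blast
  then interpret closed_immersed_homotopy C D U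
    by unfold_locales (use dom periodic immersed in auto)
  have "\<exists>d. ((\<lambda>s. sqrt (len C s)) has_real_derivative d) (at v within {0..1}) \<and>
      d \<le> 1/2 * sqrt (curv_velocity_energy v)" if "v \<in> {0..1}" for v
  proof (intro exI conjI)
    show "((\<lambda>s. sqrt (len C s)) has_real_derivative len_deriv v / (2 * sqrt (len C v))) (at v within {0..1})"
      by (rule has_real_derivative_sqrt_len[OF that])
    show "len_deriv v / (2 * sqrt (len C v)) \<le> 1/2 * sqrt (curv_velocity_energy v)"
      using abs_sqrt_len_deriv_le[OF that] by linarith
  qed
  moreover have "sqrt (len C v'') - sqrt (len C v') \<le> sqrt (Jfun C) / 2 * sqrt (v'' - v')"
    if "0 \<le> v'" "v' < v''" "v'' \<le> 1" for v' v''
    using abs_le_D1[OF sqrt_len_Holder[of v' v'']] that by simp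
  ultimately show ?thesis
    unfolding curv_velocity_energy_def using sqrt_len_Holder by blast
qed

end
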